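(* There is an $F_\sigma$ ideal $\mathcal I_0$ on $\omega$ such that $\mathcal I\le_{RK}^+\mathcal I_0$ for every $F_\sigma$ ideal $\mathcal I$ on $\omega$.
   Context: An ideal on $\omega$ is a set $\mathcal I\subseteq\mathcal P(\omega)$ closed under finite unions and under taking subsets. $\mathcal P(\omega)$ is topologized via the identification of subsets with characteristic functions in $2^\omega$ (product topology). For ideals $\mathcal I,\mathcal J$ on $\omega$, $\mathcal I\le_{RK}^+\mathcal J$ means there exist $A\subseteq\omega$ and a function $\beta:A\to\omega$ such that for every $x\subseteq\omega$, $x\in\mathcal I\iff\beta^{-1}(x)\in\mathcal J$. *)

theory Defs
  imports "HOL-Analysis.Analysis"
begin

definition ideal_on_omega :: "nat set set \<Rightarrow> bool" where
  "ideal_on_omega I \<longleftrightarrow> {} \<in> I \<and> (\<forall>x\<in>I. \<forall>y\<in>I. x \<union> y \<in> I) \<and> (\<forall>x\<in>I. \<forall>y. y \<subseteq> x \<longrightarrow> y \<in> I)"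

definition cantor_space :: "(nat \<Rightarrow> bool) topology" where
  "cantor_space = product_topology (\<lambda>_. discrete_topology (UNIV :: bool set)) UNIV"

definition char_fun :: "nat set \<Rightarrow> (nat \<Rightarrow> bool)" where
  "char_fun x = (\<lambda>n. n \<in> x)"

definition Fsigma_family :: "nat set set \<Rightarrow> bool" where
  "Fsigma_family I \<longleftrightarrow> fsigma_in cantor_space (char_fun ` I)"

definition Fsigma_ideal :: "nat set set \<Rightarrow> bool" where
  "Fsigma_ideal I \<longleftrightarrow> ideal_on_omega I \<and> Fsigma_family I"

definition RK_plus_le :: "nat set set \<Rightarrow> nat set set \<Rightarrow> bool" where
  "RK_plus_le I J \<longleftrightarrow> (\<exists>(A :: nat set) (\<beta> :: nat \<Rightarrow> nat).
      \<forall>x. x \<in> I \<longleftrightarrow> {n \<in> A. \<beta> n \<in> x} \<in> J)"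

end

(*
  An F_sigma ideal I is the union of an increasing tower of closed hereditary families
  E_0, E_1, ... with a \<union> b \<in> E_(K+1) whenever a, b \<in> E_K, and a closed hereditary family
  is determined by its finite members.  Map n to a natural number that records n together
  with every finite set s with max s = n lying in the tower, and the least level of s.
  The universal ideal consists of the sets y such that, for some K, every finite subset of y
  can be K-coloured so that every nonempty monochromatic part is "coded at level K"; this is
  an F_sigma ideal that does not depend on I.  A member of E_K is sent into it with a single
  colour.  Conversely, a K-colouring of the image of a finite set u splits u into K members
  of E_K, so u \<in> E_(2K), and closedness of E_(2K) passes this from the finite initial
  segments of x to x itself.
*)

theory Submission
  imports Defs
begin

section \<open>Closed families of subsets of \<open>\<omega>\<close>\<close>

lemma topspace_cantor_space [simp]: "topspace cantor_space = UNIV"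
  by (simp add: cantor_space_def)

lemma compact_space_cantor_space: "compact_space cantor_space"
  by (simp add: cantor_space_def compact_space_product_topology compact_space_discrete_topology)

lemma Hausdorff_space_cantor_space: "Hausdorff_space cantor_space"
  by (simp add: cantor_space_def Hausdorff_space_product_topology)

lemma continuous_map_cantor_space_coordinate:
  "continuous_map cantor_space (discrete_topology UNIV) (\<lambda>f. f k)"
  unfolding cantor_space_def by (rule continuous_map_product_projection) simp

lemma char_fun_eq_iff [simp]: "char_fun x = char_fun y \<longleftrightarrow> x = y"
  by (auto simp: char_fun_def fun_eq_iff)

lemma char_fun_Collect [simp]: "char_fun {n. f n} = f"
  by (simp add: char_fun_def)

lemma surj_char_fun: "surj char_fun"
  by (metis char_fun_Collect surjI)

definition closed_family :: "nat set set \<Rightarrow> bool" where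
  "closed_family S \<longleftrightarrow> closedin cantor_space (char_fun ` S)"

lemma closed_family_mem_if_initial_segments:
  assumes "closed_family S" and "\<And>n. x \<inter> {..<n} \<in> S"
  shows "x \<in> S"
proof -
  have "limitin cantor_space (\<lambda>n. char_fun (x \<inter> {..<n})) (char_fun x) sequentially"
    unfolding cantor_space_def limitin_componentwise
  proof (intro conjI ballI)
    fix i :: nat
    have "\<forall>\<^sub>F n in sequentially. char_fun (x \<inter> {..<n}) i = char_fun x i"
      using eventually_gt_at_top[of i] by eventually_elim (simp add: char_fun_def)
    then show "limitin (discrete_topology UNIV) (\<lambda>n. char_fun (x \<inter> {..<n}) i) (char_fun x i) sequentially"
      by (simp add: limitin_eventually)
  qed simp_all
  then have "char_fun x \<in> char_fun ` S"
    by (rule limitin_closedin) (use assms in \<open>auto simp: closed_family_def\<close>)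
  then show ?thesis by auto
qed

lemma closed_family_finite_character:
  "closed_family {y. \<forall>u. finite u \<and> u \<subseteq> y \<longrightarrow> Q u}"
proof -
  define Z where "Z u = {f. (\<forall>i\<in>u. f i) \<longrightarrow> Q u}" for u :: "nat set"
  have "char_fun ` {y. \<forall>u. finite u \<and> u \<subseteq> y \<longrightarrow> Q u} = (\<Inter>u\<in>{u. finite u}. Z u)"
  proof (intro set_eqI iffI)
    fix f assume "f \<in> char_fun ` {y. \<forall>u. finite u \<and> u \<subseteq> y \<longrightarrow> Q u}"
    then show "f \<in> (\<Inter>u\<in>{u. finite u}. Z u)"
      unfolding Z_def char_fun_def by (auto simp: subset_iff)
  next
    fix f assume "f \<in> (\<Inter>u\<in>{u. finite u}. Z u)"
    then have "{n. f n} \<in> {y. \<forall>u. finite u \<and> u \<subseteq> y \<longrightarrow> Q u}"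
      unfolding Z_def by (auto simp: subset_iff)
    then have "char_fun {n. f n} \<in> char_fun ` {y. \<forall>u. finite u \<and> u \<subseteq> y \<longrightarrow> Q u}"
      by (rule imageI)
    then show "f \<in> char_fun ` {y. \<forall>u. finite u \<and> u \<subseteq> y \<longrightarrow> Q u}"
      by simp
  qed
  moreover have "closedin cantor_space (Z u)" if "finite u" for u
  proof (cases "Q u")
    case True
    then have "Z u = topspace cantor_space"
      by (simp add: Z_def)
    then show ?thesis
      by (simp only: closedin_topspace)
  next
    case False
    then have "Z u = (\<Union>i\<in>u. {f \<in> topspace cantor_space. f i \<in> {False}})"
      by (auto simp: Z_def)
    moreover have "closedin cantor_space {f \<in> topspace cantor_space. f i \<in> {False}}" for i
      by (rule closedin_continuous_map_preimage[OF continuous_map_cantor_space_coordinate]) simp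
    ultimately show ?thesis
      using \<open>finite u\<close> by (auto intro!: closedin_Union)
  qed
  ultimately show ?thesis
    unfolding closed_family_def by (metis (mono_tags) closedin_INT empty_iff finite.emptyI mem_Collect_eq)
qed

lemma closed_family_Un: "closed_family S \<Longrightarrow> closed_family T \<Longrightarrow> closed_family (S \<union> T)"
  unfolding closed_family_def by (simp add: image_Un closedin_Un)

lemma closed_family_empty_singleton: "closed_family {{}}"
  unfolding closed_family_def using Hausdorff_space_cantor_space
  by (simp add: closedin_Hausdorff_singleton)

lemma closed_family_compact_image:
  assumes "compactin X K" and "continuous_map X cantor_space g" and "g ` K = char_fun ` S"
  shows "closed_family S"
  unfolding closed_family_def
  using assms Hausdorff_space_cantor_space image_compactin compactin_imp_closedin by metis

lemma continuous_map_cantor_space_pointwise: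
  "continuous_map (prod_topology cantor_space cantor_space) cantor_space (\<lambda>(f, g) n. h (f n) (g n))"
proof -
  have "continuous_map (prod_topology cantor_space cantor_space) (discrete_topology UNIV)
          (\<lambda>p. h (fst p n) (snd p n))" for n
  proof -
    have "continuous_map (prod_topology cantor_space cantor_space)
            (prod_topology (discrete_topology UNIV) (discrete_topology UNIV)) (\<lambda>p. (fst p n, snd p n))"
      by (intro continuous_map_pairedI
          continuous_map_compose[OF continuous_map_fst continuous_map_cantor_space_coordinate, unfolded o_def]
          continuous_map_compose[OF continuous_map_snd continuous_map_cantor_space_coordinate, unfolded o_def])
    moreover have "continuous_map (prod_topology (discrete_topology UNIV) (discrete_topology UNIV))
                     (discrete_topology UNIV) (\<lambda>q. h (fst q) (snd q))"
      by (simp flip: prod_topology_discrete_topology)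
    ultimately show ?thesis
      using continuous_map_compose[unfolded o_def] by fastforce
  qed
  then show ?thesis
    unfolding cantor_space_def continuous_map_componentwise_UNIV
    by (simp add: case_prod_beta cantor_space_def[symmetric])
qed

lemma closed_family_pairwise_unions:
  assumes "closed_family S" and "closed_family T"
  shows "closed_family {a \<union> b | a b. a \<in> S \<and> b \<in> T}"
proof (rule closed_family_compact_image)
  show "compactin (prod_topology cantor_space cantor_space) (char_fun ` S \<times> char_fun ` T)"
    using assms unfolding closed_family_def
    by (simp add: compactin_Times closedin_compact_space compact_space_cantor_space)
  show "continuous_map (prod_topology cantor_space cantor_space) cantor_space (\<lambda>(f, g) n. f n \<or> g n)"
    by (rule continuous_map_cantor_space_pointwise)
  have "(\<lambda>(f, g) n. f n \<or> g n) (char_fun a, char_fun b) = char_fun (a \<union> b)" for a b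
    by (auto simp: char_fun_def)
  then show "(\<lambda>(f, g) n. f n \<or> g n) ` (char_fun ` S \<times> char_fun ` T)
               = char_fun ` {a \<union> b | a b. a \<in> S \<and> b \<in> T}"
    by (auto simp: image_iff) blast+
qed

definition down_closure :: "nat set set \<Rightarrow> nat set set" where
  "down_closure S = {y. \<exists>a\<in>S. y \<subseteq> a}"

lemma closed_family_down_closure:
  assumes "closed_family S"
  shows "closed_family (down_closure S)"
proof (rule closed_family_compact_image)
  let ?X = "prod_topology cantor_space cantor_space"
  define R where "R = {p \<in> topspace ?X. snd p \<in> char_fun ` S}
    \<inter> {p \<in> topspace ?X. (\<lambda>(f, g) n. f n \<longrightarrow> g n) p \<in> {\<lambda>_. True}}"
  have "closedin ?X R"
    unfolding R_def using assms Hausdorff_space_cantor_space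
    by (intro closedin_Int closedin_continuous_map_preimage[OF continuous_map_snd]
        closedin_continuous_map_preimage[OF continuous_map_cantor_space_pointwise])
      (auto simp: closed_family_def closedin_Hausdorff_singleton)
  then show "compactin ?X R"
    by (simp add: closedin_compact_space compact_space_prod_topology compact_space_cantor_space)
  show "continuous_map ?X cantor_space fst"
    by (rule continuous_map_fst)
  show "fst ` R = char_fun ` down_closure S"
  proof (intro set_eqI iffI)
    fix f assume "f \<in> fst ` R"
    then obtain a where "a \<in> S" "\<forall>n. f n \<longrightarrow> n \<in> a"
      by (auto simp: R_def char_fun_def fun_eq_iff)
    then have "{n. f n} \<in> down_closure S"
      by (auto simp: down_closure_def)
    then have "char_fun {n. f n} \<in> char_fun ` down_closure S"
      by (rule imageI)
    then show "f \<in> char_fun ` down_closure S"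
      by simp
  next
    fix f assume "f \<in> char_fun ` down_closure S"
    then obtain y a where "f = char_fun y" "a \<in> S" "y \<subseteq> a"
      by (auto simp: down_closure_def)
    then have "(f, char_fun a) \<in> R"
      by (auto simp: R_def char_fun_def)
    then show "f \<in> fst ` R"
      by force
  qed
qed

section \<open>A tower of closed families exhausting an \<open>F\<^sub>\<sigma>\<close> ideal\<close>

fun ideal_levels :: "(nat \<Rightarrow> nat set set) \<Rightarrow> nat \<Rightarrow> nat set set" where
  "ideal_levels F 0 = down_closure (F 0)"
| "ideal_levels F (Suc K) =
     down_closure ({a \<union> b | a b. a \<in> ideal_levels F K \<and> b \<in> ideal_levels F K} \<union> F (Suc K))"

lemma ideal_levels_hereditary: "a \<in> ideal_levels F K \<Longrightarrow> y \<subseteq> a \<Longrightarrow> y \<in> ideal_levels F K"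
  by (cases K) (auto simp: down_closure_def)

lemma ideal_levels_Un:
  "a \<in> ideal_levels F K \<Longrightarrow> b \<in> ideal_levels F K \<Longrightarrow> a \<union> b \<in> ideal_levels F (Suc K)"
  by (auto simp: down_closure_def)

lemma ideal_levels_superset: "F K \<subseteq> ideal_levels F K"
  by (cases K) (auto simp: down_closure_def)

lemma down_closure_subset_ideal: "ideal_on_omega I \<Longrightarrow> S \<subseteq> I \<Longrightarrow> down_closure S \<subseteq> I"
  unfolding ideal_on_omega_def down_closure_def by blast

lemma ideal_levels_subset_ideal:
  assumes I: "ideal_on_omega I" and "\<And>k. F k \<subseteq> I"
  shows "ideal_levels F K \<subseteq> I"
proof (induction K)
  case 0
  show ?case
    using assms by (simp add: down_closure_subset_ideal)
next
  case (Suc K)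
  then have "{a \<union> b | a b. a \<in> ideal_levels F K \<and> b \<in> ideal_levels F K} \<subseteq> I"
    using I unfolding ideal_on_omega_def by blast
  then show ?case
    using assms by (simp add: down_closure_subset_ideal)
qed

lemma closed_family_ideal_levels: "(\<And>k. closed_family (F k)) \<Longrightarrow> closed_family (ideal_levels F K)"
  by (induction K)
    (simp_all add: closed_family_down_closure closed_family_Un closed_family_pairwise_unions)

section \<open>The universal ideal\<close>

text \<open>A number \<open>m\<close> is read as an index together with a table of pairs \<open>(ks, v)\<close>, each
  meaning that the set with indices \<open>ks\<close> plus \<open>m\<close> itself has level \<open>v\<close>.\<close>

definition code_index :: "nat \<Rightarrow> nat" where
  "code_index m = fst (prod_decode m)"

definition code_table :: "nat \<Rightarrow> (nat list \<times> nat) list" where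
  "code_table m = from_nat (snd (prod_decode m))"

definition coded :: "nat \<Rightarrow> nat set \<Rightarrow> bool" where
  "coded K t \<longleftrightarrow>
     (\<exists>m\<in>t. \<exists>ks v. (ks, v) \<in> set (code_table m) \<and> set ks = code_index ` (t - {m}) \<and> v \<le> K)"

definition colourable :: "nat \<Rightarrow> nat set \<Rightarrow> bool" where
  "colourable K u \<longleftrightarrow> (\<exists>c. (\<forall>i\<in>u. c i < K) \<and>
     (\<forall>j t. t \<subseteq> {i \<in> u. c i = j} \<longrightarrow> t \<noteq> {} \<longrightarrow> coded K t))"

definition universal_level :: "nat \<Rightarrow> nat set set" where
  "universal_level K = {y. \<forall>u. finite u \<and> u \<subseteq> y \<longrightarrow> colourable K u}"

definition universal_ideal :: "nat set set" where
  "universal_ideal = (\<Union>K. universal_level K)"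

lemma coded_mono: "coded K t \<Longrightarrow> K \<le> K' \<Longrightarrow> coded K' t"
  unfolding coded_def by fastforce

lemma colourable_mono:
  assumes "colourable K u" and "K \<le> K'"
  shows "colourable K' u"
proof -
  obtain c where c: "\<forall>i\<in>u. c i < K"
    "\<forall>j t. t \<subseteq> {i \<in> u. c i = j} \<longrightarrow> t \<noteq> {} \<longrightarrow> coded K t"
    using assms(1) unfolding colourable_def by blast
  have "\<forall>i\<in>u. c i < K'"
    using c(1) assms(2) by (auto intro: less_le_trans)
  moreover have "\<forall>j t. t \<subseteq> {i \<in> u. c i = j} \<longrightarrow> t \<noteq> {} \<longrightarrow> coded K' t"
    using c(2) assms(2) coded_mono by blast
  ultimately show ?thesis
    unfolding colourable_def by (intro exI[of _ c] conjI)
qed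

lemma colourable_Un:
  assumes "colourable K a" and "colourable K' b"
  shows "colourable (K + K') (a \<union> b)"
proof -
  obtain c1 where c1: "\<forall>i\<in>a. c1 i < K"
    "\<forall>j t. t \<subseteq> {i \<in> a. c1 i = j} \<longrightarrow> t \<noteq> {} \<longrightarrow> coded K t"
    using assms(1) unfolding colourable_def by blast
  obtain c2 where c2: "\<forall>i\<in>b. c2 i < K'"
    "\<forall>j t. t \<subseteq> {i \<in> b. c2 i = j} \<longrightarrow> t \<noteq> {} \<longrightarrow> coded K' t"
    using assms(2) unfolding colourable_def by blast
  define c where "c i = (if i \<in> a then c1 i else K + c2 i)" for i
  have "{i \<in> a \<union> b. c i = j} \<subseteq> {i \<in> a. c1 i = j}
      \<or> {i \<in> a \<union> b. c i = j} \<subseteq> {i \<in> b. c2 i = j - K}" for j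
  proof (cases "j < K")
    case True
    then show ?thesis by (auto simp: c_def)
  next
    case False
    then show ?thesis using c1(1) by (auto simp: c_def)
  qed
  then have "coded (K + K') t" if "t \<subseteq> {i \<in> a \<union> b. c i = j}" and "t \<noteq> {}" for j t
    using that c1(2) c2(2) coded_mono[of K t "K + K'"] coded_mono[of K' t "K + K'"]
    by (meson dual_order.trans le_add1 le_add2)
  moreover have "\<forall>i\<in>a \<union> b. c i < K + K'"
    using c1(1) c2(1) by (auto simp: c_def trans_less_add1)
  ultimately show ?thesis
    unfolding colourable_def by (intro exI[of _ c] conjI allI impI)
qed

lemma colourable_if_universal_level:
  "y \<in> universal_level K \<Longrightarrow> finite u \<Longrightarrow> u \<subseteq> y \<Longrightarrow> colourable K u"
  by (simp add: universal_level_def)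

lemma empty_mem_universal_level: "{} \<in> universal_level K"
proof -
  have "colourable K {}"
    by (simp add: colourable_def)
  then show ?thesis
    by (simp add: universal_level_def)
qed

lemma universal_level_hereditary: "y \<in> universal_level K \<Longrightarrow> z \<subseteq> y \<Longrightarrow> z \<in> universal_level K"
  unfolding universal_level_def by blast

lemma universal_level_mono: "K \<le> K' \<Longrightarrow> universal_level K \<subseteq> universal_level K'"
proof
  fix y assume "y \<in> universal_level K" and "K \<le> K'"
  then show "y \<in> universal_level K'"
    unfolding universal_level_def by (blast intro: colourable_mono)
qed

lemma universal_level_Un:
  assumes y: "y \<in> universal_level K" and z: "z \<in> universal_level K'"
  shows "y \<union> z \<in> universal_level (K + K')"
  unfolding universal_level_def
proof (intro CollectI allI impI, elim conjE)
  fix u assume "finite u" "u \<subseteq> y \<union> z"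
  then have "colourable K (u \<inter> y)" and "colourable K' (u \<inter> z)"
    by (auto intro: colourable_if_universal_level[OF y] colourable_if_universal_level[OF z])
  then have "colourable (K + K') ((u \<inter> y) \<union> (u \<inter> z))"
    by (rule colourable_Un)
  moreover have "(u \<inter> y) \<union> (u \<inter> z) = u"
    using \<open>u \<subseteq> y \<union> z\<close> by blast
  ultimately show "colourable (K + K') u"
    by simp
qed

lemma ideal_on_omega_universal_ideal: "ideal_on_omega universal_ideal"
  unfolding ideal_on_omega_def universal_ideal_def
proof (intro conjI ballI allI impI)
  show "{} \<in> (\<Union>K. universal_level K)"
    using empty_mem_universal_level by blast
next
  fix x y assume "x \<in> (\<Union>K. universal_level K)" "y \<in> (\<Union>K. universal_level K)"
  then show "x \<union> y \<in> (\<Union>K. universal_level K)"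
    using universal_level_Un by blast
next
  fix x y assume "x \<in> (\<Union>K. universal_level K)" "y \<subseteq> x"
  then show "y \<in> (\<Union>K. universal_level K)"
    using universal_level_hereditary by blast
qed

lemma Fsigma_family_universal_ideal: "Fsigma_family universal_ideal"
  unfolding Fsigma_family_def universal_ideal_def fsigma_in_ascending image_UN
proof (intro exI conjI allI)
  show "closedin cantor_space (char_fun ` universal_level K)" for K
    using closed_family_finite_character unfolding closed_family_def universal_level_def .
  show "char_fun ` universal_level K \<subseteq> char_fun ` universal_level (Suc K)" for K
    using universal_level_mono by (intro image_mono) simp
qed (rule refl)

section \<open>Embedding a tower into the universal ideal\<close>

definition level :: "(nat \<Rightarrow> nat set set) \<Rightarrow> nat set \<Rightarrow> nat" where
  "level E s = (LEAST K. s \<in> E K)"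

definition level_table :: "(nat \<Rightarrow> nat set set) \<Rightarrow> nat \<Rightarrow> (nat list \<times> nat) list" where
  "level_table E n = map (\<lambda>ks. (ks, level E (insert n (set ks))))
     (filter (\<lambda>ks. \<exists>K. insert n (set ks) \<in> E K) (subseqs [0..<n]))"

definition level_code :: "(nat \<Rightarrow> nat set set) \<Rightarrow> nat \<Rightarrow> nat" where
  "level_code E n = prod_encode (n, to_nat (level_table E n))"

lemma code_index_level_code [simp]: "code_index (level_code E n) = n"
  by (simp add: code_index_def level_code_def)

lemma code_table_level_code [simp]: "code_table (level_code E n) = level_table E n"
  by (simp add: code_table_def level_code_def)

lemma inj_level_code: "inj (level_code E)"
  by (metis code_index_level_code injI)

lemma code_index_image_level_code_Diff:
  "code_index ` (level_code E ` s - {level_code E n}) = s - {n}"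
proof -
  have "level_code E ` s - {level_code E n} = level_code E ` (s - {n})"
    by (simp add: image_set_diff[OF inj_level_code])
  then show ?thesis
    by (simp add: image_image)
qed

locale ideal_tower =
  fixes E :: "nat \<Rightarrow> nat set set"
  assumes hereditary: "a \<in> E K \<Longrightarrow> y \<subseteq> a \<Longrightarrow> y \<in> E K"
    and Un_mem: "a \<in> E K \<Longrightarrow> b \<in> E K \<Longrightarrow> a \<union> b \<in> E (Suc K)"
    and closed: "closed_family (E K)"
begin

lemma mono: "j \<le> K \<Longrightarrow> E j \<subseteq> E K"
  by (rule lift_Suc_mono_le[of E]) (use Un_mem[of _ _ _] in \<open>metis Un_absorb subsetI\<close>)

lemma UN_mem:
  assumes "\<And>j. j < m \<Longrightarrow> A j = {} \<or> A j \<in> E K"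
  shows "(\<Union>j<m. A j) = {} \<or> (\<Union>j<m. A j) \<in> E (K + m)"
  using assms
proof (induction m)
  case (Suc m)
  have "E K \<subseteq> E (K + m)"
    by (rule mono) simp
  then have "A m = {} \<or> A m \<in> E (K + m)" and "(\<Union>j<m. A j) = {} \<or> (\<Union>j<m. A j) \<in> E (K + m)"
    using Suc by auto
  moreover have "(\<Union>j<Suc m. A j) = (\<Union>j<m. A j) \<union> A m"
    by (simp add: lessThan_Suc Un_commute)
  moreover have "E (K + m) \<subseteq> E (K + Suc m)"
    by (rule mono) simp
  ultimately show ?case
    using Un_mem[of "\<Union>j<m. A j" "K + m" "A m"] by auto
qed simp

lemma level_mem: "s \<in> E K \<Longrightarrow> s \<in> E (level E s) \<and> level E s \<le> K"
  unfolding level_def by (metis LeastI Least_le)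

lemma coded_level_code_iff:
  assumes "finite s" and "s \<noteq> {}"
  shows "coded K (level_code E ` s) \<longleftrightarrow> s \<in> E K"
proof
  assume "coded K (level_code E ` s)"
  then obtain n ks v where "n \<in> s" and table: "(ks, v) \<in> set (level_table E n)"
      and "v \<le> K" and "set ks = code_index ` (level_code E ` s - {level_code E n})"
    unfolding coded_def by auto
  then have "set ks = s - {n}"
    by (simp add: code_index_image_level_code_Diff)
  then have "insert n (set ks) = s"
    using \<open>n \<in> s\<close> by auto
  then have "v = level E s" and "\<exists>K'. s \<in> E K'"
    using table by (auto simp: level_table_def)
  then show "s \<in> E K"
    using level_mem mono \<open>v \<le> K\<close> by blast
next
  assume "s \<in> E K"
  define n where "n = Max s"
  have "n \<in> s" and "s - {n} \<subseteq> set [0..<n]"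
    using assms Max_ge by (auto simp: n_def less_le)
  then obtain ks where ks: "ks \<in> set (subseqs [0..<n])" "set ks = s - {n}"
    using subseqs_powset by (metis Pow_iff imageE)
  then have "insert n (set ks) = s"
    using \<open>n \<in> s\<close> by auto
  then have "(ks, level E s) \<in> set (level_table E n)"
    using ks(1) \<open>s \<in> E K\<close> by (auto simp: level_table_def)
  then show "coded K (level_code E ` s)"
    unfolding coded_def using \<open>n \<in> s\<close> ks(2) level_mem[OF \<open>s \<in> E K\<close>]
    by (intro bexI[of _ "level_code E n"]) (auto simp: code_index_image_level_code_Diff)
qed

lemma level_code_image_mem_universal_level:
  assumes "x \<in> E K"
  shows "level_code E ` x \<in> universal_level (Suc K)"
  unfolding universal_level_def
proof (intro CollectI allI impI, elim conjE)
  fix u assume "finite u" and u: "u \<subseteq> level_code E ` x"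
  have "coded (Suc K) t" if "t \<subseteq> u" and "t \<noteq> {}" for t
  proof -
    have "t \<subseteq> level_code E ` x"
      using that u by blast
    then obtain s where "s \<subseteq> x" and t: "t = level_code E ` s"
      by (rule subset_imageE)
    moreover have "finite s"
      using t that \<open>finite u\<close> inj_level_code
      by (metis finite_imageD finite_subset inj_on_subset subset_UNIV)
    ultimately have "coded K t"
      using that assms hereditary by (auto simp: coded_level_code_iff)
    then show ?thesis
      by (rule coded_mono) simp
  qed
  then have "coded (Suc K) t" if "t \<subseteq> {i \<in> u. (0::nat) = j}" and "t \<noteq> {}" for j t
    using that by blast
  then show "colourable (Suc K) u"
    unfolding colourable_def by (intro exI[of _ "\<lambda>_. 0"] conjI ballI allI impI) simp_all
qed

lemma mem_if_colourable_level_code_image: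
  assumes "finite u" and "colourable K (level_code E ` u)"
  shows "u = {} \<or> u \<in> E (K + K)"
proof -
  obtain c where c: "\<forall>i\<in>level_code E ` u. c i < K"
    and classes_coded: "\<forall>j t. t \<subseteq> {i \<in> level_code E ` u. c i = j} \<longrightarrow> t \<noteq> {} \<longrightarrow> coded K t"
    using assms(2) unfolding colourable_def by blast
  define colour_class where "colour_class j = {i \<in> u. c (level_code E i) = j}" for j
  have "colour_class j = {} \<or> colour_class j \<in> E K" for j
  proof (cases "colour_class j = {}")
    case False
    have "level_code E ` colour_class j \<subseteq> {i \<in> level_code E ` u. c i = j}"
      and "level_code E ` colour_class j \<noteq> {}"
      using False by (auto simp: colour_class_def)
    then have "coded K (level_code E ` colour_class j)"
      by (rule classes_coded[rule_format])
    moreover have "finite (colour_class j)"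
      using assms(1) by (simp add: colour_class_def)
    ultimately show ?thesis
      using False by (simp add: coded_level_code_iff)
  qed simp
  then have "(\<Union>j<K. colour_class j) = {} \<or> (\<Union>j<K. colour_class j) \<in> E (K + K)"
    by (rule UN_mem)
  moreover have "u = (\<Union>j<K. colour_class j)"
    using c unfolding colour_class_def by auto
  ultimately show ?thesis
    by simp
qed

lemma mem_if_level_code_image_mem_universal_level:
  assumes "level_code E ` x \<in> universal_level K"
  shows "x = {} \<or> x \<in> E (K + K)"
proof -
  have "closed_family (E (K + K) \<union> {{}})"
    by (intro closed_family_Un closed closed_family_empty_singleton)
  moreover have "x \<inter> {..<n} \<in> E (K + K) \<union> {{}}" for n
  proof -
    have "colourable K (level_code E ` (x \<inter> {..<n}))"
      using assms by (rule colourable_if_universal_level) auto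
    then show ?thesis
      using mem_if_colourable_level_code_image by blast
  qed
  ultimately have "x \<in> E (K + K) \<union> {{}}"
    by (rule closed_family_mem_if_initial_segments)
  then show ?thesis
    by blast
qed

theorem level_code_image_mem_universal_ideal_iff:
  "level_code E ` x \<in> universal_ideal \<longleftrightarrow> x = {} \<or> (\<exists>K. x \<in> E K)"
  using level_code_image_mem_universal_level mem_if_level_code_image_mem_universal_level
    empty_mem_universal_level
  unfolding universal_ideal_def by fastforce

end

lemma ideal_tower_ideal_levels:
  "(\<And>k. closed_family (F k)) \<Longrightarrow> ideal_tower (ideal_levels F)"
proof
  show "y \<in> ideal_levels F K" if "a \<in> ideal_levels F K" and "y \<subseteq> a" for a y K
    using that by (rule ideal_levels_hereditary)
  show "a \<union> b \<in> ideal_levels F (Suc K)" if "a \<in> ideal_levels F K" and "b \<in> ideal_levels F K" for a b K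
    using that by (rule ideal_levels_Un)
qed (rule closed_family_ideal_levels)

lemma Fsigma_family_closed_families:
  assumes "Fsigma_family I"
  obtains F :: "nat \<Rightarrow> nat set set" where "\<And>k. closed_family (F k)" and "I = (\<Union>k. F k)"
proof -
  obtain C :: "nat \<Rightarrow> (nat \<Rightarrow> bool) set"
    where C: "\<And>n. closedin cantor_space (C n)" and I: "(\<Union>n. C n) = char_fun ` I"
    using assms unfolding Fsigma_family_def fsigma_in_ascending by blast
  have "char_fun ` (char_fun -` C k) = C k" for k
    using surj_char_fun by (rule surj_image_vimage_eq)
  then have "closed_family (char_fun -` C k)" for k
    using C by (simp add: closed_family_def)
  moreover have "I = (\<Union>k. char_fun -` C k)"
    using I by (auto simp flip: vimage_UN)
  ultimately show thesis
    by (rule that[of "\<lambda>k. char_fun -` C k"])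
qed

lemma RK_plus_le_if_inj:
  assumes "inj e" and "\<And>x. x \<in> I \<longleftrightarrow> e ` x \<in> J"
  shows "RK_plus_le I J"
proof -
  have "{n \<in> range e. inv e n \<in> x} = e ` x" for x
    using assms(1) by (auto simp: inv_f_f)
  then show ?thesis
    unfolding RK_plus_le_def using assms(2)
    by (intro exI[of _ "range e"] exI[of _ "inv e"]) simp
qed

theorem mainTheorem17:
  shows "\<exists>I0. Fsigma_ideal I0 \<and> (\<forall>I. Fsigma_ideal I \<longrightarrow> RK_plus_le I I0)"
proof (intro exI conjI allI impI)
  show "Fsigma_ideal universal_ideal"
    by (simp add: Fsigma_ideal_def ideal_on_omega_universal_ideal Fsigma_family_universal_ideal)
next
  fix I assume "Fsigma_ideal I"
  then have I: "ideal_on_omega I" and "Fsigma_family I"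
    by (simp_all add: Fsigma_ideal_def)
  obtain F :: "nat \<Rightarrow> nat set set" where F: "\<And>k. closed_family (F k)" and I_eq: "I = (\<Union>k. F k)"
    using Fsigma_family_closed_families[OF \<open>Fsigma_family I\<close>] by blast
  interpret ideal_tower "ideal_levels F"
    using F by (rule ideal_tower_ideal_levels)
  have "F k \<subseteq> I" for k
    using I_eq by blast
  then have "I = (\<Union>K. ideal_levels F K)"
    using ideal_levels_subset_ideal[OF I] ideal_levels_superset I_eq by blast
  moreover have "{} \<in> I"
    using I by (simp add: ideal_on_omega_def)
  ultimately have "x \<in> I \<longleftrightarrow> level_code (ideal_levels F) ` x \<in> universal_ideal" for x
    unfolding level_code_image_mem_universal_ideal_iff by blast
  with inj_level_code show "RK_plus_le I universal_ideal"
    by (rule RK_plus_le_if_inj)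
qed

end
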